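(* For every integer $d\ge 3$, the space $\mathcal P_d$ is path connected.
   Context: A polynomial knot is a map $\phi:\mathbb R\to\mathbb R^3$ with real polynomial components which is a smooth embedding ($\phi$ injective and $\phi'(t)\ne0$ for all $t$). For $d\ge2$, $\mathcal A_d$ is the set of polynomial maps $t\mapsto(f(t),g(t),h(t))$ with $\deg f\le d-2$, $\deg g\le d-1$, $\deg h\le d$, topologized via the bijection $\eta:\mathcal A_d\to\mathbb R^{3d}$ sending $(f,g,h)$ to the vector $(a_0,\dots,a_{d-2},b_0,\dots,b_{d-1},c_0,\dots,c_d)$ of coefficients of $f=\sum a_it^i$, $g=\sum b_it^i$, $h=\sum c_it^i$ (Euclidean topology). The zero polynomial has degree $-\infty$. $\mathcal P_d$ is the subspace of $\mathcal A_d$ consisting of polynomial knots $(f,g,h)$ with $\deg f<\deg g<\deg h\le d$. *)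

theory Defs
  imports "HOL-Analysis.Analysis" "HOL-Computational_Algebra.Polynomial"
begin

text \<open>Degree with the convention that the zero polynomial has degree minus infinity;
  we encode minus infinity by -1, which is below every genuine degree and is not
  strictly below itself, so all strict comparisons agree with the paper.\<close>
definition pdeg :: "real poly \<Rightarrow> int" where
  "pdeg p = (if p = 0 then -1 else int (degree p))"

definition poly_knot :: "real poly \<times> real poly \<times> real poly \<Rightarrow> bool" where
  "poly_knot \<phi> = (case \<phi> of (f, g, h) \<Rightarrow>
      inj (\<lambda>t::real. (poly f t, poly g t, poly h t)) \<and>
      (\<forall>t::real. (poly (pderiv f) t, poly (pderiv g) t, poly (pderiv h) t) \<noteq> (0, 0, 0)))"

definition A_space :: "nat \<Rightarrow> (real poly \<times> real poly \<times> real poly) set" where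
  "A_space d = {(f, g, h). pdeg f \<le> int d - 2 \<and> pdeg g \<le> int d - 1 \<and> pdeg h \<le> int d}"

definition P_space :: "nat \<Rightarrow> (real poly \<times> real poly \<times> real poly) set" where
  "P_space d = {\<phi> \<in> A_space d. poly_knot \<phi> \<and>
      (case \<phi> of (f, g, h) \<Rightarrow> pdeg f < pdeg g \<and> pdeg g < pdeg h \<and> pdeg h \<le> int d)}"

text \<open>The coefficient map eta : A_d \<rightarrow> R^{3d}; R^{3d} is realised as the functions
  nat \<Rightarrow> real vanishing from index 3d on (coordinates 0..3d-1 are
  a_0..a_{d-2}, b_0..b_{d-1}, c_0..c_d), with the product topology, which on this
  subspace is the Euclidean topology.\<close>
definition eta :: "nat \<Rightarrow> real poly \<times> real poly \<times> real poly \<Rightarrow> (nat \<Rightarrow> real)" where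
  "eta d \<phi> = (case \<phi> of (f, g, h) \<Rightarrow> (\<lambda>i.
      if i < d - 1 then coeff f i
      else if i < 2 * d - 1 then coeff g (i - (d - 1))
      else if i < 3 * d then coeff h (i - (2 * d - 1))
      else 0))"

end

theory Submission
  imports Defs
begin

text \<open>Every knot in \<open>P_d\<close> can be deformed inside \<open>P_d\<close> to the base knot
  \<open>(0, t, t + t\<^sup>3)\<close>. If \<open>g\<close> is not constant, translate the parameter to a point where
  \<open>g' \<noteq> 0\<close> and shear \<open>(g, h)\<close> by \<open>(g, h) \<mapsto> (g + c, h + e g + k)\<close> so that \<open>g\<close> vanishes
  to first and \<open>h\<close> to second order at \<open>0\<close>. The rescaling
  \<open>t \<mapsto> (u f(ut), g(ut)/u, h(ut)/u\<^sup>m)\<close> with \<open>u \<rightarrow> 0\<close> then contracts the knot to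
  \<open>(0, \<beta> t, \<gamma> t\<^sup>m)\<close>, \<open>m \<ge> 2\<close>. Such curves are knots as soon as \<open>g\<close> is linear and
  \<open>h\<close> has a nonzero coefficient in degree at least \<open>2\<close>, and this is kept along straight
  segments between polynomials with disjoint dominating coefficients. If \<open>g\<close> is constant,
  then \<open>f = 0\<close> and \<open>h\<close> alone is an embedding, so \<open>g\<close> can be made nonconstant after
  bending a linear \<open>h\<close> into a cubic.\<close>

definition continuous_coeffs :: "(real \<Rightarrow> real poly) \<Rightarrow> bool" where
  "continuous_coeffs P \<longleftrightarrow> (\<forall>i. continuous_on {0..1} (\<lambda>s. coeff (P s) i))"

lemma continuous_coeffs_const: "continuous_coeffs (\<lambda>s. p)"
  by (simp add: continuous_coeffs_def)

lemma continuous_coeffs_add: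
  "continuous_coeffs P \<Longrightarrow> continuous_coeffs Q \<Longrightarrow> continuous_coeffs (\<lambda>s. P s + Q s)"
  by (auto simp: continuous_coeffs_def intro!: continuous_intros)

lemma continuous_coeffs_mult:
  "continuous_coeffs P \<Longrightarrow> continuous_coeffs Q \<Longrightarrow> continuous_coeffs (\<lambda>s. P s * Q s)"
  by (auto simp: continuous_coeffs_def coeff_mult intro!: continuous_intros)

lemma continuous_coeffs_smult:
  "continuous_on {0..1} a \<Longrightarrow> continuous_coeffs P \<Longrightarrow> continuous_coeffs (\<lambda>s. smult (a s) (P s))"
  by (auto simp: continuous_coeffs_def intro!: continuous_intros)

lemma continuous_coeffs_pCons:
  assumes "continuous_on {0..1} a" "continuous_coeffs P"
  shows "continuous_coeffs (\<lambda>s. pCons (a s) (P s))"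
  unfolding continuous_coeffs_def
proof
  fix i
  show "continuous_on {0..1} (\<lambda>s. coeff (pCons (a s) (P s)) i)"
    using assms by (cases i) (auto simp: continuous_coeffs_def)
qed

lemma continuous_coeffs_pcompose:
  "continuous_coeffs Q \<Longrightarrow> continuous_coeffs (\<lambda>s. pcompose p (Q s))"
  by (induction p)
    (simp_all add: pcompose_pCons continuous_coeffs_add continuous_coeffs_mult continuous_coeffs_const)

lemmas continuous_coeffs_intros =
  continuous_coeffs_const continuous_coeffs_add continuous_coeffs_mult continuous_coeffs_smult
  continuous_coeffs_pCons continuous_coeffs_pcompose

lemma path_component_eta_image:
  assumes "continuous_coeffs F" "continuous_coeffs G" "continuous_coeffs H"
    and "\<forall>s\<in>{0..1}. (F s, G s, H s) \<in> S"
  shows "path_component (eta d ` S) (eta d (F 0, G 0, H 0)) (eta d (F 1, G 1, H 1))"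
  unfolding path_component_def
proof (intro exI conjI)
  let ?\<gamma> = "\<lambda>s. eta d (F s, G s, H s)"
  show "path ?\<gamma>"
    unfolding path_def
  proof (rule continuous_on_coordinatewise_then_product)
    fix i
    show "continuous_on {0..1} (\<lambda>s. ?\<gamma> s i)"
      using assms(1-3) unfolding continuous_coeffs_def eta_def
      by (cases "i < d - 1"; cases "i < 2 * d - 1"; cases "i < 3 * d") simp_all
  qed
  show "path_image ?\<gamma> \<subseteq> eta d ` S"
    using assms(4) unfolding path_image_def by auto
qed (simp_all add: pathstart_def pathfinish_def)

definition P_joined ::
    "nat \<Rightarrow> real poly \<times> real poly \<times> real poly \<Rightarrow> real poly \<times> real poly \<times> real poly \<Rightarrow> bool" where
  "P_joined d \<phi> \<psi> \<longleftrightarrow> path_component (eta d ` P_space d) (eta d \<phi>) (eta d \<psi>)"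

lemma P_joined_trans [trans]: "P_joined d \<phi> \<psi> \<Longrightarrow> P_joined d \<psi> \<xi> \<Longrightarrow> P_joined d \<phi> \<xi>"
  unfolding P_joined_def by (rule path_component_trans)

lemma P_joined_path:
  assumes "continuous_coeffs F" "continuous_coeffs G" "continuous_coeffs H"
    and "\<forall>s\<in>{0..1}. (F s, G s, H s) \<in> P_space d"
  shows "P_joined d (F 0, G 0, H 0) (F 1, G 1, H 1)"
  unfolding P_joined_def using assms by (rule path_component_eta_image)

lemma P_joined_segment:
  assumes "\<forall>s\<in>{0..1}. (smult (1-s) f0 + smult s f1, smult (1-s) g0 + smult s g1,
     smult (1-s) h0 + smult s h1) \<in> P_space d"
  shows "P_joined d (f0, g0, h0) (f1, g1, h1)"
proof -
  have "\<And>p q. continuous_coeffs (\<lambda>s. smult (1-s) p + smult s q)"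
    by (intro continuous_coeffs_intros continuous_intros)
  from P_joined_path[OF this this this assms] show ?thesis by simp
qed

lemma smult_segment_same [simp]: "smult (1-s) p + smult s p = (p::real poly)"
  by (simp add: smult_add_left[symmetric])

lemma degree_segment_le:
  "degree p \<le> n \<Longrightarrow> degree q \<le> n \<Longrightarrow> degree (smult a p + smult b (q::real poly)) \<le> n"
  by (meson degree_add_le degree_smult_le order_trans)

definition poly_embedding :: "real poly \<Rightarrow> bool" where
  "poly_embedding p \<longleftrightarrow> inj (poly p) \<and> (\<forall>t. poly (pderiv p) t \<noteq> 0)"

lemma poly_knot_if_embedding_snd: "poly_embedding g \<Longrightarrow> poly_knot (f, g, h)"
  unfolding poly_knot_def poly_embedding_def by (auto simp: inj_def)

lemma poly_knot_if_embedding_thd: "poly_embedding h \<Longrightarrow> poly_knot (f, g, h)"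
  unfolding poly_knot_def poly_embedding_def by (auto simp: inj_def)

lemma poly_embedding_linear: "b \<noteq> 0 \<Longrightarrow> poly_embedding [:a, b:]"
  unfolding poly_embedding_def by (auto simp: inj_def pderiv_pCons)

lemma poly_embedding_cubic:
  assumes "0 \<le> s"
  shows "poly_embedding [:0, 1, 0, s:]"
  unfolding poly_embedding_def
proof
  have pos: "0 < 1 + s * (x\<^sup>2 + x * y + y\<^sup>2)" for x y :: real
  proof -
    have "x\<^sup>2 + x * y + y\<^sup>2 = (x + y/2)\<^sup>2 + 3 * y\<^sup>2 / 4"
      by (simp add: algebra_simps power2_eq_square)
    then have "0 \<le> x\<^sup>2 + x * y + y\<^sup>2" by simp
    with assms show ?thesis by (simp add: add_pos_nonneg)
  qed
  show "inj (poly [:0, 1, 0, s:])"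
  proof (rule injI)
    fix x y :: real
    assume "poly [:0, 1, 0, s:] x = poly [:0, 1, 0, s:] y"
    then have "(x - y) * (1 + s * (x\<^sup>2 + x * y + y\<^sup>2)) = 0"
      by (simp add: algebra_simps power2_eq_square)
    with pos[of x y] show "x = y" by simp
  qed
  show "\<forall>t. poly (pderiv [:0, 1, 0, s:]) t \<noteq> 0"
  proof
    fix t :: real
    have "0 \<le> s * (3 * t\<^sup>2)" using assms by simp
    then show "poly (pderiv [:0, 1, 0, s:]) t \<noteq> 0"
      by (simp add: pderiv_pCons algebra_simps power2_eq_square)
  qed
qed

lemma poly_embedding_affine:
  assumes "poly_embedding p" "a \<noteq> 0"
  shows "poly_embedding ([:b:] + smult a p)"
  using assms unfolding poly_embedding_def by (auto simp: inj_def pderiv_add pderiv_smult pderiv_pCons)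

lemma P_space_iff:
  "(f, g, h) \<in> P_space d \<longleftrightarrow> poly_knot (f, g, h) \<and> pdeg f \<le> int d - 2 \<and>
     pdeg g \<le> int d - 1 \<and> pdeg h \<le> int d \<and> pdeg f < pdeg g \<and> pdeg g < pdeg h"
  by (auto simp: P_space_def A_space_def)

lemma pdeg_smult_pcompose_linear:
  "\<alpha> \<noteq> 0 \<Longrightarrow> a \<noteq> 0 \<Longrightarrow> pdeg (smult \<alpha> (pcompose p [:b, a:])) = pdeg p"
  unfolding pdeg_def by (simp add: degree_pcompose pcompose_eq_0_iff)

lemma pdeg_add_lower_degree:
  assumes "1 \<le> degree p" "degree q < degree p"
  shows "pdeg (p + q) = pdeg p"
proof -
  have "degree (p + q) = degree p" using assms(2) by (rule degree_add_eq_left)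
  with assms show ?thesis by (auto simp: pdeg_def)
qed

lemma poly_knot_reparam_scale:
  assumes "poly_knot (f, g, h)" "a \<noteq> 0" "\<alpha> \<noteq> 0" "\<beta> \<noteq> 0" "\<delta> \<noteq> 0"
  shows "poly_knot (smult \<alpha> (pcompose f [:b, a:]), smult \<beta> (pcompose g [:b, a:]),
    smult \<delta> (pcompose h [:b, a:]))"
proof -
  have inj: "inj (\<lambda>t. (poly f t, poly g t, poly h t))"
    and der: "\<And>t. (poly (pderiv f) t, poly (pderiv g) t, poly (pderiv h) t) \<noteq> (0, 0, 0)"
    using assms(1) by (auto simp: poly_knot_def)
  have "inj (\<lambda>t. (\<alpha> * poly f (b + t * a), \<beta> * poly g (b + t * a), \<delta> * poly h (b + t * a)))"
  proof (rule injI)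
    fix x y
    assume "(\<alpha> * poly f (b + x * a), \<beta> * poly g (b + x * a), \<delta> * poly h (b + x * a)) =
      (\<alpha> * poly f (b + y * a), \<beta> * poly g (b + y * a), \<delta> * poly h (b + y * a))"
    with assms have "(poly f (b + x * a), poly g (b + x * a), poly h (b + x * a)) =
      (poly f (b + y * a), poly g (b + y * a), poly h (b + y * a))" by simp
    then have "b + x * a = b + y * a" by (rule injD[OF inj])
    with assms show "x = y" by simp
  qed
  moreover have "(\<alpha> * (poly (pderiv f) (b + t * a) * a), \<beta> * (poly (pderiv g) (b + t * a) * a),
      \<delta> * (poly (pderiv h) (b + t * a) * a)) \<noteq> (0, 0, 0)" for t
    using der[of "b + t * a"] assms by simp
  ultimately show ?thesis
    using assms by (auto simp: poly_knot_def poly_pcompose pderiv_smult pderiv_pcompose pderiv_pCons)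
qed

lemma P_space_reparam_scale:
  assumes "(f, g, h) \<in> P_space d" "a \<noteq> 0" "\<alpha> \<noteq> 0" "\<beta> \<noteq> 0" "\<delta> \<noteq> 0"
  shows "(smult \<alpha> (pcompose f [:b, a:]), smult \<beta> (pcompose g [:b, a:]),
    smult \<delta> (pcompose h [:b, a:])) \<in> P_space d"
  using assms poly_knot_reparam_scale[of f g h a \<alpha> \<beta> \<delta> b]
  by (simp add: P_space_iff pdeg_smult_pcompose_linear)

lemma poly_knot_shear:
  assumes "poly_knot (f, g, h)"
  shows "poly_knot (f, g + [:c:], h + smult e g + [:k:])"
proof -
  have inj: "inj (\<lambda>t. (poly f t, poly g t, poly h t))"
    and der: "\<And>t. (poly (pderiv f) t, poly (pderiv g) t, poly (pderiv h) t) \<noteq> (0, 0, 0)"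
    using assms by (auto simp: poly_knot_def)
  have "inj (\<lambda>t. (poly f t, poly g t + c, poly h t + e * poly g t + k))"
  proof (rule injI)
    fix x y
    assume "(poly f x, poly g x + c, poly h x + e * poly g x + k) =
      (poly f y, poly g y + c, poly h y + e * poly g y + k)"
    then have "(poly f x, poly g x, poly h x) = (poly f y, poly g y, poly h y)" by auto
    then show "x = y" by (rule injD[OF inj])
  qed
  with der show ?thesis
    by (simp add: poly_knot_def pderiv_add pderiv_smult pderiv_pCons)
qed

lemma P_space_shear:
  assumes "(f, g, h) \<in> P_space d" "1 \<le> degree g"
  shows "(f, g + [:c:], h + smult e g + [:k:]) \<in> P_space d"
proof -
  have "degree g < degree h"
    using assms by (auto simp: P_space_iff pdeg_def split: if_splits)
  moreover have "degree (smult e g + [:k:]) \<le> degree g"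
    by (metis degree_add_le degree_pCons_0 degree_smult_le le0)
  ultimately have "pdeg (h + (smult e g + [:k:])) = pdeg h"
    using assms(2) by (intro pdeg_add_lower_degree) auto
  moreover have "pdeg (g + [:c:]) = pdeg g"
    using assms(2) by (intro pdeg_add_lower_degree) auto
  ultimately show ?thesis
    using assms(1) poly_knot_shear by (simp add: P_space_iff add.assoc)
qed

lemma P_space_if_embedding_thd:
  assumes "poly_embedding h" "pdeg f \<le> int d - 2" "pdeg g \<le> int d - 1" "pdeg h \<le> int d"
    "pdeg f < pdeg g" "pdeg g < pdeg h"
  shows "(f, g, h) \<in> P_space d"
  using assms poly_knot_if_embedding_thd by (simp add: P_space_iff)

lemma P_space_linear_snd:
  assumes "\<beta> \<noteq> 0" "coeff h j \<noteq> 0" "2 \<le> j" "degree h \<le> d"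
  shows "(0, [:c, \<beta>:], h) \<in> P_space d"
proof -
  have "j \<le> degree h" using assms(2) by (rule le_degree)
  with assms show ?thesis
    by (auto simp: P_space_iff pdeg_def poly_knot_if_embedding_snd poly_embedding_linear)
qed

definition base_knot :: "real poly \<times> real poly \<times> real poly" where
  "base_knot = (0, [:0, 1:], [:0, 1, 0, 1:])"

lemma coeff_base_cubic: "coeff [:0, 1, 0, 1:] m = (if m = 1 \<or> m = 3 then 1 else (0::real))"
  by (simp add: coeff_pCons split: nat.split)

lemma segment_coeff_nonzero:
  fixes p q :: "real poly"
  assumes "coeff p i \<noteq> 0" "coeff q i = 0" "coeff q j \<noteq> 0" "coeff p j = 0" "s \<in> {0..1}"
  shows "coeff (smult (1-s) p + smult s q) i \<noteq> 0 \<or> coeff (smult (1-s) p + smult s q) j \<noteq> 0"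
proof (cases "s = 1")
  case False
  then have "1 - s \<noteq> 0" by simp
  with assms(1,2) show ?thesis by simp
qed (use assms in simp)

lemma P_joined_segment_snd:
  assumes "3 \<le> d" "coeff p i \<noteq> 0" "coeff q i = 0" "coeff q j \<noteq> 0" "coeff p j = 0"
    "degree p \<le> 2" "degree q \<le> 2"
  shows "P_joined d (0, p, [:0, 1, 0, 1:]) (0, q, [:0, 1, 0, 1:])"
proof (rule P_joined_segment, intro ballI)
  fix s :: real
  assume "s \<in> {0..1}"
  then have "smult (1-s) p + smult s q \<noteq> 0"
    using segment_coeff_nonzero[OF assms(2-5)] by (metis coeff_0)
  moreover have "degree (smult (1-s) p + smult s q) \<le> 2"
    using assms(6,7) by (rule degree_segment_le)
  ultimately have "(0, smult (1-s) p + smult s q, [:0, 1, 0, 1:]) \<in> P_space d"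
    using assms(1) poly_embedding_cubic[of 1]
    by (intro P_space_if_embedding_thd) (auto simp: pdeg_def)
  then show "(smult (1-s) 0 + smult s 0, smult (1-s) p + smult s q,
      smult (1-s) [:0, 1, 0, 1:] + smult s [:0, 1, 0, 1:]) \<in> P_space d"
    by (simp only: smult_segment_same)
qed

lemma P_joined_segment_thd:
  assumes "\<beta> \<noteq> 0" "2 \<le> i" "2 \<le> j" "coeff p i \<noteq> 0" "coeff q i = 0" "coeff q j \<noteq> 0"
    "coeff p j = 0" "degree p \<le> d" "degree q \<le> d"
  shows "P_joined d (0, [:0, \<beta>:], p) (0, [:0, \<beta>:], q)"
proof (rule P_joined_segment, intro ballI)
  fix s :: real
  assume "s \<in> {0..1}"
  then obtain k where "2 \<le> k" "coeff (smult (1-s) p + smult s q) k \<noteq> 0"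
    using segment_coeff_nonzero[OF assms(4-7)] assms(2,3) by blast
  moreover have "degree (smult (1-s) p + smult s q) \<le> d"
    using assms(8,9) by (rule degree_segment_le)
  ultimately have "(0, [:0, \<beta>:], smult (1-s) p + smult s q) \<in> P_space d"
    using assms(1) by (simp add: P_space_linear_snd)
  then show "(smult (1-s) 0 + smult s 0, smult (1-s) [:0, \<beta>:] + smult s [:0, \<beta>:],
      smult (1-s) p + smult s q) \<in> P_space d"
    by (simp only: smult_segment_same)
qed

lemma P_joined_linear_to_base:
  assumes "3 \<le> d" "\<beta> \<noteq> 0"
  shows "P_joined d (0, [:0, \<beta>:], [:0, 1, 0, 1:]) base_knot"
proof -
  have "P_joined d (0, [:0, \<beta>:], [:0, 1, 0, 1:]) (0, [:0, 0, 1:], [:0, 1, 0, 1:])"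
    by (rule P_joined_segment_snd[where i = 1 and j = 2])
      (use assms in \<open>auto simp: numeral_2_eq_2\<close>)
  also have "P_joined d \<dots> base_knot"
    unfolding base_knot_def
    by (rule P_joined_segment_snd[where i = 2 and j = 1])
      (use assms in \<open>auto simp: numeral_2_eq_2\<close>)
  finally show ?thesis .
qed

lemma P_joined_monomial_to_base:
  assumes "3 \<le> d" "\<beta> \<noteq> 0" "\<gamma> \<noteq> 0" "2 \<le> m" "m \<le> d"
  shows "P_joined d (0, [:0, \<beta>:], monom \<gamma> m) base_knot"
proof -
  have to_cubic: "P_joined d (0, [:0, \<beta>:], monom c k) (0, [:0, \<beta>:], [:0, 1, 0, 1:])"
    if "c \<noteq> 0" "2 \<le> k" "k \<le> d" "k \<noteq> 3" for c k
    by (rule P_joined_segment_thd[where i = k and j = 3])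
      (use assms that in \<open>auto simp: coeff_base_cubic degree_monom_eq\<close>)
  have "P_joined d (0, [:0, \<beta>:], monom \<gamma> m) (0, [:0, \<beta>:], [:0, 1, 0, 1:])"
  proof (cases "m = 3")
    case True
    have "P_joined d (0, [:0, \<beta>:], monom \<gamma> m) (0, [:0, \<beta>:], monom 1 2)"
      by (rule P_joined_segment_thd[where i = 3 and j = 2])
        (use assms True in \<open>auto simp: degree_monom_eq\<close>)
    also have "P_joined d \<dots> (0, [:0, \<beta>:], [:0, 1, 0, 1:])"
      using assms by (intro to_cubic) auto
    finally show ?thesis .
  qed (use assms to_cubic in auto)
  also have "P_joined d \<dots> base_knot"
    by (rule P_joined_linear_to_base[OF assms(1,2)])
  finally show ?thesis .
qed

lemma poly_monom_factor:
  fixes p :: "'a::idom poly"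
  assumes "p \<noteq> 0"
  obtains m q where "p = monom 1 m * q" "coeff q 0 \<noteq> 0"
proof -
  obtain q where "p = [:-0, 1:] ^ order 0 p * q" "\<not> [:-0, 1:] dvd q"
    using order_decomp[OF assms] by blast
  moreover have "coeff q 0 \<noteq> 0"
    using calculation(2) poly_eq_0_iff_dvd[of q 0] by (simp add: poly_0_coeff_0)
  ultimately show ?thesis
    using that[of "order 0 p" q] by (simp add: monom_altdef)
qed

lemma P_joined_translate:
  assumes "(f, g, h) \<in> P_space d"
  shows "P_joined d (f, g, h) (pcompose f [:t0, 1:], pcompose g [:t0, 1:], pcompose h [:t0, 1:])"
proof -
  have path: "continuous_coeffs (\<lambda>s. pcompose p [:s * t0, 1:])" for p
    by (intro continuous_coeffs_intros continuous_intros)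
  have "\<forall>s\<in>{0..1}. (pcompose f [:s * t0, 1:], pcompose g [:s * t0, 1:], pcompose h [:s * t0, 1:])
      \<in> P_space d"
    using P_space_reparam_scale[OF assms, of 1 1 1 1] by simp
  from P_joined_path[OF path path path this] show ?thesis by simp
qed

lemma P_joined_shear:
  assumes "(f, g, h) \<in> P_space d" "1 \<le> degree g"
  shows "P_joined d (f, g, h) (f, g + [:c:], h + smult e g + [:k:])"
proof -
  have "continuous_coeffs (\<lambda>s. g + [:s * c:])"
    "continuous_coeffs (\<lambda>s. h + smult (s * e) g + [:s * k:])"
    by (intro continuous_coeffs_intros continuous_intros)+
  moreover have "\<forall>s\<in>{0..1}. (f, g + [:s * c:], h + smult (s * e) g + [:s * k:]) \<in> P_space d"
    using P_space_shear[OF assms] by blast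
  ultimately show ?thesis
    using P_joined_path[OF continuous_coeffs_const] by fastforce
qed

lemma P_joined_contract_factored:
  assumes mem: "(f, pCons 0 Q, monom 1 m * R) \<in> P_space d"
    and "coeff Q 0 \<noteq> 0" "coeff R 0 \<noteq> 0" "2 \<le> m" "m \<le> d"
  shows "P_joined d (f, pCons 0 Q, monom 1 m * R) (0, [:0, coeff Q 0:], monom (coeff R 0) m)"
proof -
  let ?F = "\<lambda>s. smult (1 - s) (pcompose f [:0, 1 - s:])"
  let ?G = "\<lambda>s. pCons 0 (pcompose Q [:0, 1 - s:])"
  let ?H = "\<lambda>s. monom 1 m * pcompose R [:0, 1 - s:]"
  have "continuous_coeffs ?F" "continuous_coeffs ?G" "continuous_coeffs ?H"
    by (intro continuous_coeffs_intros continuous_intros)+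
  moreover have "(?F s, ?G s, ?H s) \<in> P_space d" if "s \<in> {0..1}" for s
  proof (cases "s = 1")
    case True
    have "(0, [:0, coeff Q 0:], monom (coeff R 0) m) \<in> P_space d"
      using assms by (intro P_space_linear_snd[where j = m]) (auto simp: degree_monom_eq)
    then show ?thesis
      using True by (simp add: pcompose_0' smult_monom mult.commute)
  next
    case False
    define u where "u = 1 - s"
    have u: "u \<noteq> 0" using False by (simp add: u_def)
    have "?G s = smult (1 / u) (pcompose (pCons 0 Q) [:0, u:])"
      by (intro poly_eq_poly_eq_iff[THEN iffD1] ext) (use u in \<open>simp add: u_def poly_pcompose\<close>)
    moreover have "?H s = smult (1 / u ^ m) (pcompose (monom 1 m * R) [:0, u:])"
      by (intro poly_eq_poly_eq_iff[THEN iffD1] ext)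
        (use u in \<open>simp add: u_def poly_pcompose poly_monom power_mult_distrib\<close>)
    moreover have "?F s = smult u (pcompose f [:0, u:])" by (simp add: u_def)
    ultimately show ?thesis
      using P_space_reparam_scale[OF mem u u] u by simp
  qed
  ultimately show ?thesis
    using P_joined_path[of ?F ?G ?H d] by (simp add: pcompose_0' smult_monom mult.commute)
qed

lemma P_joined_contract:
  assumes mem: "(f, g, h) \<in> P_space d"
    and g: "coeff g 0 = 0" "coeff g 1 \<noteq> 0" and h: "coeff h 0 = 0" "coeff h 1 = 0"
  obtains m \<gamma> where "2 \<le> m" "m \<le> d" "\<gamma> \<noteq> 0"
    "P_joined d (f, g, h) (0, [:0, coeff g 1:], monom \<gamma> m)"
proof -
  obtain a Q where "g = pCons a Q" by (rule pCons_cases)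
  with g have gQ: "g = pCons 0 Q" by simp
  have "h \<noteq> 0" "degree h \<le> d"
    using mem by (auto simp: P_space_iff pdeg_def split: if_splits)
  then obtain m R where hR: "h = monom 1 m * R" and R: "coeff R 0 \<noteq> 0"
    using poly_monom_factor by blast
  have hm: "coeff h m = coeff R 0" by (simp add: hR coeff_monom_mult)
  have "2 \<le> m"
  proof (rule ccontr)
    assume "\<not> 2 \<le> m"
    then have "m = 0 \<or> m = 1" by auto
    with h R hm show False by auto
  qed
  moreover have "m \<le> d"
    using le_degree[of h m] hm R \<open>degree h \<le> d\<close> by simp
  ultimately have "P_joined d (f, pCons 0 Q, monom 1 m * R) (0, [:0, coeff Q 0:], monom (coeff R 0) m)"
    using mem R g(2) by (intro P_joined_contract_factored) (simp_all add: gQ hR)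
  then show ?thesis
    using that[of m "coeff R 0"] R \<open>2 \<le> m\<close> \<open>m \<le> d\<close> by (simp add: gQ hR)
qed

lemma P_joined_base_if_nonconstant_snd:
  assumes d: "3 \<le> d" and mem: "(f, g, h) \<in> P_space d" and deg: "1 \<le> degree g"
  shows "P_joined d (f, g, h) base_knot"
proof -
  have "pderiv g \<noteq> 0" using deg by (simp add: pderiv_eq_0_iff)
  then obtain t0 where t0: "poly (pderiv g) t0 \<noteq> 0" using poly_all_0_iff_0 by blast
  define f1 where "f1 = pcompose f [:t0, 1:]"
  define g1 where "g1 = pcompose g [:t0, 1:]"
  define h1 where "h1 = pcompose h [:t0, 1:]"
  have joined1: "P_joined d (f, g, h) (f1, g1, h1)"
    unfolding f1_def g1_def h1_def using mem by (rule P_joined_translate)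
  have mem1: "(f1, g1, h1) \<in> P_space d"
    using P_space_reparam_scale[OF mem, of 1 1 1 1 t0] by (simp add: f1_def g1_def h1_def)
  have deg1: "1 \<le> degree g1" using deg by (simp add: g1_def degree_pcompose)
  have "coeff g1 1 = poly (pderiv g) t0"
    by (simp add: g1_def coeff_pderiv[of _ 0, simplified, symmetric] poly_0_coeff_0[symmetric]
        pderiv_pcompose poly_pcompose pderiv_pCons)
  with t0 have g1: "coeff g1 1 \<noteq> 0" by simp
  \<comment> \<open>after this shear \<open>G\<close> vanishes at \<open>0\<close> and \<open>H\<close> vanishes there to second order\<close>
  define \<nu> where "\<nu> = coeff h1 1 / coeff g1 1"
  define \<kappa> where "\<kappa> = coeff h1 0 - \<nu> * coeff g1 0"
  define G where "G = g1 + [:- coeff g1 0:]"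
  define H where "H = h1 + smult (- \<nu>) g1 + [:- \<kappa>:]"
  have joined2: "P_joined d (f1, g1, h1) (f1, G, H)"
    unfolding G_def H_def using mem1 deg1 by (rule P_joined_shear)
  have mem2: "(f1, G, H) \<in> P_space d"
    unfolding G_def H_def using mem1 deg1 by (rule P_space_shear)
  have G: "coeff G 0 = 0" "coeff G 1 = coeff g1 1" and H: "coeff H 0 = 0" "coeff H 1 = 0"
    using g1 by (simp_all add: G_def H_def \<nu>_def \<kappa>_def)
  obtain m \<gamma> where m: "2 \<le> m" "m \<le> d" "\<gamma> \<noteq> 0"
    and joined3: "P_joined d (f1, G, H) (0, [:0, coeff G 1:], monom \<gamma> m)"
    using P_joined_contract[OF mem2 G(1) _ H] G(2) g1 by auto
  note joined1
  also note joined2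
  also note joined3
  also have "P_joined d (0, [:0, coeff G 1:], monom \<gamma> m) base_knot"
    using d g1 m G(2) by (intro P_joined_monomial_to_base) simp_all
  finally show ?thesis .
qed

lemma poly_embedding_if_poly_knot_const:
  "poly_knot ([:a:], [:b:], h) \<Longrightarrow> poly_embedding h"
  unfolding poly_knot_def poly_embedding_def by (auto simp: inj_def pderiv_pCons)

lemma P_joined_base_if_constant_snd_embedding:
  assumes d: "3 \<le> d" and "c \<noteq> 0" "poly_embedding h" "2 \<le> degree h" "degree h \<le> d"
  shows "P_joined d (0, [:c:], h) base_knot"
proof -
  have mem: "(0, [:c, s:], h) \<in> P_space d" for s
    using assms by (intro P_space_if_embedding_thd) (auto simp: pdeg_def)
  have "P_joined d (0, [:c:], h) (0, [:c, 1:], h)"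
  proof (rule P_joined_segment, intro ballI)
    fix s :: real
    have "smult (1 - s) [:c:] + smult s [:c, 1:] = [:c, s:]" by (simp add: algebra_simps)
    with mem[of s] show "(smult (1-s) 0 + smult s 0, smult (1-s) [:c:] + smult s [:c, 1:],
        smult (1-s) h + smult s h) \<in> P_space d"
      by (simp only: smult_segment_same)
  qed
  also have "P_joined d \<dots> base_knot"
    using d mem[of 1] by (rule P_joined_base_if_nonconstant_snd) simp
  finally show ?thesis .
qed

lemma P_joined_base_if_constant_snd:
  assumes d: "3 \<le> d" and mem: "(f, g, h) \<in> P_space d" and deg: "degree g = 0"
  shows "P_joined d (f, g, h) base_knot"
proof -
  obtain c where g: "g = [:c:]" using deg by (rule degree_eq_zeroE)
  have c: "c \<noteq> 0" and f: "f = 0" and h: "1 \<le> degree h" "degree h \<le> d"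
    using mem deg by (auto simp: P_space_iff pdeg_def g split: if_splits)
  have emb: "poly_embedding h"
    using mem poly_embedding_if_poly_knot_const[of 0 c h] by (simp add: P_space_iff f g)
  show ?thesis
  proof (cases "2 \<le> degree h")
    case True
    with d c emb h show ?thesis unfolding f g by (intro P_joined_base_if_constant_snd_embedding)
  next
    case False
    with h have "degree h = 1" by simp
    obtain a q where hq: "h = pCons a q" by (rule pCons_cases)
    with \<open>degree h = 1\<close> obtain b where "q = [:b:]" "b \<noteq> 0"
      by (metis One_nat_def degree_eq_zeroE degree_pCons_eq_if nat.inject pCons_0_0 zero_neq_one)
    with hq have h_lin: "h = [:a:] + smult b [:0, 1, 0, 0:]" by simp
    let ?H = "\<lambda>s. [:a:] + smult b [:0, 1, 0, s:]"
    have emb_s: "poly_embedding (?H s)" if "0 \<le> s" for s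
      using poly_embedding_affine[OF poly_embedding_cubic[OF that] \<open>b \<noteq> 0\<close>] .
    have deg_s: "1 \<le> degree (?H s)" "degree (?H s) \<le> 3" for s
      using \<open>b \<noteq> 0\<close> le_degree[of "?H s" 1] by (auto intro: degree_pCons_le)
    have "continuous_coeffs ?H"
      by (intro continuous_coeffs_intros continuous_intros)
    moreover have "\<forall>s\<in>{0..1}. (0, [:c:], ?H s) \<in> P_space d"
      using d c emb_s deg_s by (auto intro!: P_space_if_embedding_thd simp: pdeg_def)
    ultimately have "P_joined d (0, [:c:], h) (0, [:c:], ?H 1)"
      using P_joined_path[OF continuous_coeffs_const continuous_coeffs_const] h_lin by fastforce
    also have "P_joined d \<dots> base_knot"
      using d c \<open>b \<noteq> 0\<close> emb_s[of 1] deg_s(2)[of 1]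
      by (intro P_joined_base_if_constant_snd_embedding) simp_all
    finally show ?thesis unfolding f g .
  qed
qed

lemma P_joined_base:
  assumes "3 \<le> d" "\<phi> \<in> P_space d"
  shows "P_joined d \<phi> base_knot"
proof -
  obtain f g h where "\<phi> = (f, g, h)" by (cases \<phi>)
  with assms show ?thesis
    using P_joined_base_if_nonconstant_snd P_joined_base_if_constant_snd
    by (cases "degree g = 0") auto
qed

theorem mainTheorem4:
  fixes d :: nat
  assumes "d \<ge> 3"
  shows "path_connected (eta d ` P_space d)"
  unfolding path_connected_component
proof (intro ballI)
  fix x y
  assume "x \<in> eta d ` P_space d" "y \<in> eta d ` P_space d"
  then obtain \<phi> \<psi> where "\<phi> \<in> P_space d" "\<psi> \<in> P_space d" "x = eta d \<phi>" "y = eta d \<psi>"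
    by blast
  with P_joined_base[OF assms] show "path_component (eta d ` P_space d) x y"
    unfolding P_joined_def by (meson path_component_sym path_component_trans)
qed

end
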